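(* For the hypergeometric weights described in the context, \[ (\vartheta H)H^{-1}=\alpha,\qquad -\phi=(\Lambda^\top)^2\gamma+\Lambda^\top\beta,\qquad -\tilde\phi=\Lambda^\top(\mathfrak a_-H)H^{-1}. \]
   Context: Weights on $\mathbb N_0$: $w^{(a)}(k)=\frac{(b^{(a)}_1)_k\cdots(b^{(a)}_{M^{(a)}})_k}{(c_1)_k\cdots(c_N)_k}\frac{(\eta^{(a)})^k}{k!}$, $a\in\{1,2\}$, convergent series. Moment matrix (indices from 0): $\mathscr M_{n,2m}=\sum_k k^{n+m}w^{(1)}(k)$, $\mathscr M_{n,2m+1}=\sum_k k^{n+m}w^{(2)}(k)$, with all leading principal minors nonzero, so $\mathscr M=S^{-1}H\tilde S^{-\top}$ ($S,\tilde S$ lower unitriangular, $H=\operatorname{diag}(H_0,H_1,\dots)$), depending on $(\eta^{(1)},\eta^{(2)})$. $\Lambda$ has ones on the first superdiagonal; $S\Lambda S^{-1}=(\Lambda^\top)^2\gamma+\Lambda^\top\beta+\alpha+\Lambda$ with diagonal $\alpha,\beta,\gamma$. $\vartheta^{(a)}=\eta^{(a)}\partial/\partial\eta^{(a)}$, $\vartheta=\vartheta^{(1)}+\vartheta^{(2)}$, $\phi=(\vartheta S)S^{-1}$, $\tilde\phi=(\vartheta\tilde S)\tilde S^{-1}$. $\mathfrak a_-\operatorname{diag}(m_0,m_1,\dots)=\operatorname{diag}(m_1,m_2,\dots)$. *)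

theory Defs
  imports "HOL-Analysis.Analysis"
begin

type_synonym imat = "nat \<Rightarrow> nat \<Rightarrow> real"

text \<open>Product of infinite matrices, for row-finite left factors (every product in the
statement has a row-finite left factor: lower triangular, banded or diagonal).\<close>
definition mmul :: "imat \<Rightarrow> imat \<Rightarrow> imat" where
  "mmul A B = (\<lambda>i j. \<Sum>k\<in>{k. A i k \<noteq> 0}. A i k * B k j)"

definition madd :: "imat \<Rightarrow> imat \<Rightarrow> imat" where
  "madd A B = (\<lambda>i j. A i j + B i j)"

definition mneg :: "imat \<Rightarrow> imat" where
  "mneg A = (\<lambda>i j. - A i j)"

definition mtrans :: "imat \<Rightarrow> imat" where
  "mtrans A = (\<lambda>i j. A j i)"

definition diagm :: "(nat \<Rightarrow> real) \<Rightarrow> imat" where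
  "diagm d = (\<lambda>i j. if i = j then d i else 0)"

definition idm :: imat where
  "idm = diagm (\<lambda>_. 1)"

definition Lam :: imat where
  "Lam = (\<lambda>i j. if j = Suc i then 1 else 0)"

definition LamT :: imat where
  "LamT = mtrans Lam"

definition lower_unitri :: "imat \<Rightarrow> bool" where
  "lower_unitri A \<longleftrightarrow> (\<forall>i j. i < j \<longrightarrow> A i j = 0) \<and> (\<forall>i. A i i = 1)"

text \<open>Inverse of a lower unitriangular matrix (in the algebra of lower triangular matrices).\<close>
definition lt_inv :: "imat \<Rightarrow> imat" where
  "lt_inv A = (THE B. lower_unitri B \<and> mmul A B = idm)"

definition lead_minor :: "imat \<Rightarrow> nat \<Rightarrow> real" where
  "lead_minor A n = (\<Sum>p | p permutes {..<n}. of_int (sign p) * (\<Prod>i<n. A i (p i)))"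

definition hgw :: "real list \<Rightarrow> real list \<Rightarrow> real \<Rightarrow> nat \<Rightarrow> real" where
  "hgw b c eta k = (\<Prod>x\<leftarrow>b. pochhammer x k) / (\<Prod>x\<leftarrow>c. pochhammer x k) * eta ^ k / fact k"

definition moment :: "real list \<Rightarrow> real list \<Rightarrow> real list \<Rightarrow> real \<times> real \<Rightarrow> imat" where
  "moment b1 b2 c p = (\<lambda>n j. if even j
      then (\<Sum>k. real k ^ (n + j div 2) * hgw b1 c (fst p) k)
      else (\<Sum>k. real k ^ (n + j div 2) * hgw b2 c (snd p) k))"

definition theta :: "(real \<times> real \<Rightarrow> real) \<Rightarrow> real \<times> real \<Rightarrow> real" where
  "theta g p = fst p * deriv (\<lambda>t. g (t, snd p)) (fst p) + snd p * deriv (\<lambda>t. g (fst p, t)) (snd p)"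

definition mtheta :: "(real \<times> real \<Rightarrow> imat) \<Rightarrow> real \<times> real \<Rightarrow> imat" where
  "mtheta A p = (\<lambda>i j. theta (\<lambda>q. A q i j) p)"

definition phi :: "(real \<times> real \<Rightarrow> imat) \<Rightarrow> real \<times> real \<Rightarrow> imat" where
  "phi S p = mmul (mtheta S p) (lt_inv (S p))"

end

theory Submission
  imports Defs "Jordan_Normal_Form.Determinant"
begin

text \<open>
  The Euler operator theta multiplies the k-th term of every moment series by k, so it shifts the
  moment matrix by one row: theta M = Lambda M. Differentiating the diagonal matrix
  H = S M St^T therefore gives theta H = phi H + (S Lambda S^-1) H + H phi~^T, where phi and
  phi~ are strictly lower triangular. Comparing the diagonal, the strictly lower and the strictly
  upper parts of this identity gives the three formulas.

  Since infinite products only make sense with a row-finite left factor, the computation is done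
  entrywise with finite sums. The analytic input is that the moments are power series in
  eta1 and eta2, hence differentiable, and that the entries of H, S and St are obtained from
  finitely many moments by rational operations whose denominators are the H k; these do not vanish
  because the leading principal minors of M are the products H 0 * ... * H (n - 1).
\<close>

section \<open>Row-finite products and lower unitriangular matrices\<close>

lemma mmul_eq_sum_atMost:
  assumes "\<And>k. N < k \<Longrightarrow> A i k = 0"
  shows "mmul A B i j = (\<Sum>k\<le>N. A i k * B k j)"
  unfolding mmul_def
  by (rule sum.mono_neutral_left) (use assms in \<open>auto simp: not_less[symmetric]\<close>)

lemma lower_unitri_above: "lower_unitri A \<Longrightarrow> i < k \<Longrightarrow> A i k = 0"
  by (simp add: lower_unitri_def)

lemma lower_unitri_diag: "lower_unitri A \<Longrightarrow> A i i = 1"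
  by (simp add: lower_unitri_def)

lemma mmul_lower_unitri: "lower_unitri A \<Longrightarrow> mmul A B i j = (\<Sum>k\<le>i. A i k * B k j)"
  by (rule mmul_eq_sum_atMost) (simp add: lower_unitri_above)

lemma mmul_lower_unitri_split:
  "lower_unitri A \<Longrightarrow> mmul A B i j = B i j + (\<Sum>k<i. A i k * B k j)"
  by (simp add: mmul_lower_unitri lessThan_Suc_atMost[symmetric] lower_unitri_diag)

function unitri_inv :: "imat \<Rightarrow> nat \<Rightarrow> nat \<Rightarrow> real" where
  "unitri_inv A i j = (if i < j then 0 else if i = j then 1
     else - (\<Sum>k\<in>{j..<i}. A i k * unitri_inv A k j))"
  by auto
termination by (relation "Wellfounded.measure (\<lambda>(A, i, j). i)") auto

declare unitri_inv.simps[simp del]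

lemma lower_unitri_unitri_inv: "lower_unitri (unitri_inv A)"
  unfolding lower_unitri_def by (auto simp: unitri_inv.simps)

lemma mmul_unitri_inv:
  assumes "lower_unitri A"
  shows "mmul A (unitri_inv A) = idm"
proof (intro ext)
  fix i j
  have "(\<Sum>k<i. A i k * unitri_inv A k j) = (\<Sum>k\<in>{j..<i}. A i k * unitri_inv A k j)"
    by (rule sum.mono_neutral_right) (auto simp: unitri_inv.simps)
  then show "mmul A (unitri_inv A) i j = idm i j"
    by (simp add: mmul_lower_unitri_split[OF assms] idm_def diagm_def unitri_inv.simps[of A i j])
qed

lemma lower_unitri_right_inverse_unique:
  assumes A: "lower_unitri A" and "mmul A B = idm" "mmul A C = idm"
  shows "B = C"
proof -
  have "\<forall>j. B i j = C i j" for i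
  proof (induction i rule: less_induct)
    case (less i)
    have "(\<Sum>k<i. A i k * B k j) = (\<Sum>k<i. A i k * C k j)" for j
      using less by (intro sum.cong) auto
    moreover have "mmul A B i j = mmul A C i j" for j
      using assms by simp
    ultimately show ?case by (simp add: mmul_lower_unitri_split[OF A])
  qed
  then show ?thesis by (intro ext) simp
qed

lemma lt_inv:
  assumes "lower_unitri A"
  shows "lower_unitri (lt_inv A)" and "mmul A (lt_inv A) = idm"
proof -
  have "lower_unitri (lt_inv A) \<and> mmul A (lt_inv A) = idm"
    unfolding lt_inv_def
  proof (rule theI[of _ "unitri_inv A"])
    show "lower_unitri (unitri_inv A) \<and> mmul A (unitri_inv A) = idm"
      by (simp add: lower_unitri_unitri_inv mmul_unitri_inv[OF assms])
    show "B = unitri_inv A" if "lower_unitri B \<and> mmul A B = idm" for B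
      using that lower_unitri_right_inverse_unique[OF assms] mmul_unitri_inv[OF assms] by blast
  qed
  then show "lower_unitri (lt_inv A)" and "mmul A (lt_inv A) = idm" by simp_all
qed

lemma lower_unitri_left_inverse_entry:
  assumes A: "lower_unitri A" and B: "lower_unitri B" and AB: "mmul A B = idm" and "j < i"
  shows "A i j = - (\<Sum>k\<in>{j<..i}. A i k * B k j)"
proof -
  have "0 = mmul A B i j" using AB \<open>j < i\<close> by (simp add: idm_def diagm_def)
  also have "\<dots> = (\<Sum>k\<in>{j..i}. A i k * B k j)"
    unfolding mmul_lower_unitri[OF A]
    by (rule sum.mono_neutral_right) (auto simp: lower_unitri_above[OF B])
  also have "\<dots> = A i j + (\<Sum>k\<in>{j<..i}. A i k * B k j)"
    using \<open>j < i\<close> by (simp add: sum.atLeast_Suc_atMost atLeastSucAtMost_greaterThanAtMost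
        lower_unitri_diag[OF B])
  finally show ?thesis by linarith
qed

definition strictly_lower :: "imat \<Rightarrow> bool" where
  "strictly_lower A \<longleftrightarrow> (\<forall>i j. i \<le> j \<longrightarrow> A i j = 0)"

lemma strictly_lower_mmul:
  assumes A: "strictly_lower A" and B: "lower_unitri B"
  shows "strictly_lower (mmul A B)"
  unfolding strictly_lower_def
proof (intro allI impI)
  fix n m :: nat assume "n \<le> m"
  have "mmul A B n m = (\<Sum>a\<le>n. A n a * B a m)"
    by (rule mmul_eq_sum_atMost) (use A in \<open>simp add: strictly_lower_def\<close>)
  also have "\<dots> = 0"
  proof (intro sum.neutral ballI)
    fix a assume "a \<in> {..n}"
    then show "A n a * B a m = 0"
      using A \<open>n \<le> m\<close> lower_unitri_above[OF B, of a m]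
      by (cases "a = n") (auto simp: strictly_lower_def)
  qed
  finally show "mmul A B n m = 0" .
qed

lemma mmul_diagm_right:
  assumes "\<And>k. i < k \<Longrightarrow> A i k = 0"
  shows "mmul A (diagm d) i j = A i j * d j"
proof -
  have "mmul A (diagm d) i j = (\<Sum>k\<le>i. A i k * diagm d k j)"
    by (rule mmul_eq_sum_atMost) (use assms in auto)
  also have "\<dots> = (if j \<le> i then A i j * d j else 0)"
    by (simp add: diagm_def if_distrib[of "(*) _"] cong: if_cong)
  also have "\<dots> = A i j * d j" using assms by simp
  finally show ?thesis .
qed

lemma mmul_diagm_diagm: "mmul (diagm a) (diagm b) = diagm (\<lambda>i. a i * b i)"
proof (intro ext)
  fix i j
  have "mmul (diagm a) (diagm b) i j = diagm a i j * b j"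
    by (rule mmul_diagm_right) (simp add: diagm_def)
  then show "mmul (diagm a) (diagm b) i j = diagm (\<lambda>i. a i * b i) i j"
    by (simp add: diagm_def)
qed

lemma LamT_entry: "LamT i j = (if i = Suc j then 1 else 0)"
  by (simp add: LamT_def mtrans_def Lam_def)

lemma mmul_LamT: "mmul LamT X i j = (if i = 0 then 0 else X (i - 1) j)"
proof -
  have "mmul LamT X i j = (\<Sum>k\<le>i. LamT i k * X k j)"
    by (rule mmul_eq_sum_atMost) (simp add: LamT_entry)
  then show ?thesis by (cases i) (simp_all add: LamT_entry if_distrib[of "\<lambda>x. x * _"] cong: if_cong)
qed

lemma lower_band_entry:
  "madd (mmul (mmul LamT LamT) (diagm \<gamma>)) (mmul LamT (diagm \<beta>)) n m
     = (if n = Suc (Suc m) then \<gamma> m else 0) + (if n = Suc m then \<beta> m else 0)"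
proof -
  have "mmul (mmul LamT LamT) (diagm \<gamma>) n m = mmul LamT LamT n m * \<gamma> m"
    by (rule mmul_diagm_right) (simp add: mmul_LamT LamT_entry)
  then show ?thesis by (auto simp: madd_def mmul_LamT LamT_entry diagm_def)
qed

lemma band_entry:
  "madd (madd (madd (mmul (mmul LamT LamT) (diagm \<gamma>)) (mmul LamT (diagm \<beta>))) (diagm \<alpha>)) Lam n m
     = (if n = Suc (Suc m) then \<gamma> m else 0) + (if n = Suc m then \<beta> m else 0)
       + (if n = m then \<alpha> m else 0) + (if m = Suc n then 1 else 0)"
  using lower_band_entry[of \<gamma> \<beta> n m] by (simp add: madd_def diagm_def Lam_def)

lemma mmul_Lam_entry:
  assumes s: "lower_unitri s"
  shows "mmul (mmul s Lam) l n m = (\<Sum>a\<le>n. s n a * l (Suc a) m)"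
proof -
  have sLam: "mmul s Lam n c = (if c = 0 then 0 else s n (c - 1))" for c
  proof -
    have "mmul s Lam n c = (\<Sum>k\<le>n. s n k * (if c = Suc k then 1 else 0))"
      by (simp add: mmul_lower_unitri[OF s] Lam_def)
    then show ?thesis
      by (cases c) (auto simp: if_distrib[of "(*) _"] lower_unitri_above[OF s] cong: if_cong)
  qed
  have "mmul (mmul s Lam) l n m = (\<Sum>c\<le>Suc n. mmul s Lam n c * l c m)"
    by (rule mmul_eq_sum_atMost) (simp add: sLam lower_unitri_above[OF s])
  also have "\<dots> = (\<Sum>a\<le>n. s n a * l (Suc a) m)"
    by (subst sum.atMost_Suc_shift) (simp add: sLam)
  finally show ?thesis .
qed

section \<open>LDU factorisations\<close>

lemma LDU_entry:
  assumes L: "lower_unitri L" and U: "lower_unitri U"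
    and M: "M = mmul (mmul L (diagm h)) (mtrans U)" and "min i j \<le> N"
  shows "M i j = (\<Sum>k\<le>N. L i k * h k * U j k)"
proof -
  have LD: "mmul L (diagm h) i k = L i k * h k" for i k
    by (rule mmul_diagm_right) (simp add: lower_unitri_above[OF L])
  have "M i j = (\<Sum>k\<le>i. L i k * h k * U j k)"
    unfolding M by (subst mmul_eq_sum_atMost[of i]) (auto simp: LD lower_unitri_above[OF L] mtrans_def)
  also have "\<dots> = (\<Sum>k\<le>min i j. L i k * h k * U j k)"
    by (rule sum.mono_neutral_right) (auto simp: lower_unitri_above[OF U])
  also have "\<dots> = (\<Sum>k\<le>N. L i k * h k * U j k)"
    using \<open>min i j \<le> N\<close>
    by (intro sum.mono_neutral_left) (auto simp: lower_unitri_above[OF L] lower_unitri_above[OF U])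
  finally show ?thesis .
qed

lemma LDU_entry_split:
  assumes L: "lower_unitri L" and U: "lower_unitri U"
    and M: "M = mmul (mmul L (diagm h)) (mtrans U)" and "n \<le> i"
  shows "M i n = L i n * h n + (\<Sum>k<n. L i k * h k * U n k)"
    and "M n i = h n * U i n + (\<Sum>k<n. L n k * h k * U i k)"
  using LDU_entry[OF L U M, of i n n] LDU_entry[OF L U M, of n i n] \<open>n \<le> i\<close>
  by (simp_all add: lessThan_Suc_atMost[symmetric] lower_unitri_diag[OF L] lower_unitri_diag[OF U])

lemma LDU_mmul_right_inverse:
  assumes L: "lower_unitri L" and U: "lower_unitri U" and St: "lower_unitri St"
    and M: "M = mmul (mmul L (diagm h)) (mtrans U)" and StU: "mmul St U = idm"
  shows "(\<Sum>b\<le>m. M a b * St m b) = L a m * h m"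
proof -
  have "(\<Sum>b\<le>m. M a b * St m b) = (\<Sum>b\<le>m. \<Sum>k\<le>a+m. L a k * h k * U b k * St m b)"
    by (simp add: LDU_entry[OF L U M, of a _ "a+m"] sum_distrib_right)
  also have "\<dots> = (\<Sum>k\<le>a+m. L a k * h k * mmul St U m k)"
    by (subst sum.swap) (simp add: mmul_lower_unitri[OF St] sum_distrib_left mult_ac)
  also have "\<dots> = L a m * h m"
    by (simp add: StU idm_def diagm_def if_distrib[of "(*) _"] cong: if_cong)
  finally show ?thesis .
qed

lemma LDU_mmul_left_inverse:
  assumes L: "lower_unitri L" and U: "lower_unitri U" and S: "lower_unitri S"
    and M: "M = mmul (mmul L (diagm h)) (mtrans U)" and SL: "mmul S L = idm"
  shows "(\<Sum>a\<le>n. S n a * M a b) = h n * U b n"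
proof -
  have "(\<Sum>a\<le>n. S n a * M a b) = (\<Sum>a\<le>n. \<Sum>k\<le>n+b. S n a * (L a k * h k * U b k))"
    by (simp add: LDU_entry[OF L U M, of _ b "n+b"] sum_distrib_left)
  also have "\<dots> = (\<Sum>k\<le>n+b. (\<Sum>a\<le>n. S n a * L a k) * h k * U b k)"
    by (subst sum.swap) (simp add: sum_distrib_right mult.assoc)
  also have "\<dots> = (\<Sum>k\<le>n+b. idm n k * (h k * U b k))"
    by (simp add: mmul_lower_unitri[OF S, symmetric] SL mult.assoc)
  also have "\<dots> = h n * U b n"
    by (simp add: idm_def diagm_def if_distrib[of "\<lambda>x. x * _"] cong: if_cong)
  finally show ?thesis .
qed

lemma LDU_conjugate:
  assumes L: "lower_unitri L" and U: "lower_unitri U" and S: "lower_unitri S" and St: "lower_unitri St"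
    and M: "M = mmul (mmul L (diagm h)) (mtrans U)" and SL: "mmul S L = idm" and StU: "mmul St U = idm"
  shows "(\<Sum>a\<le>n. \<Sum>b\<le>m. S n a * M a b * St m b) = h n * idm n m"
proof -
  have "(\<Sum>a\<le>n. \<Sum>b\<le>m. S n a * M a b * St m b) = (\<Sum>a\<le>n. S n a * (\<Sum>b\<le>m. M a b * St m b))"
    by (simp add: sum_distrib_left mult.assoc)
  also have "\<dots> = (\<Sum>a\<le>n. S n a * L a m) * h m"
    by (simp add: LDU_mmul_right_inverse[OF L U St M StU] sum_distrib_right mult.assoc)
  also have "\<dots> = h n * idm n m"
    using SL by (simp add: mmul_lower_unitri[OF S, symmetric] idm_def diagm_def)
  finally show ?thesis .
qed

lemma lead_minor_LDU:
  assumes L: "lower_unitri L" and U: "lower_unitri U"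
    and M: "M = mmul (mmul L (diagm h)) (mtrans U)"
  shows "lead_minor M n = (\<Prod>i<n. h i)"
proof -
  define Lm where "Lm = Matrix.mat n n (\<lambda>(i, j). L i j)"
  define X where "X = Matrix.mat n n (\<lambda>(i, j). h i * U j i)"
  have Lc: "Lm \<in> carrier_mat n n" and Xc: "X \<in> carrier_mat n n"
    unfolding Lm_def X_def by auto
  have "lead_minor M n = Determinant.det (Matrix.mat n n (\<lambda>(i, j). M i j))"
    unfolding lead_minor_def Determinant.det_def
    by (auto simp: atLeast0LessThan permutes_in_image intro!: sum.cong prod.cong)
  also have "Matrix.mat n n (\<lambda>(i, j). M i j) = Lm * X"
  proof (rule eq_matI)
    fix i j assume "i < dim_row (Lm * X)" and "j < dim_col (Lm * X)"
    then have "i < n" "j < n" using Lc Xc by auto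
    then show "Matrix.mat n n (\<lambda>(i, j). M i j) $$ (i, j) = (Lm * X) $$ (i, j)"
      using LDU_entry[OF L U M, of i j "n - 1"]
      by (simp add: Lm_def X_def scalar_prod_def atLeast0LessThan lessThan_Suc_atMost[symmetric] mult.assoc)
  qed (use Lc Xc in auto)
  also have "Determinant.det (Lm * X) = Determinant.det Lm * Determinant.det X"
    by (rule det_mult[OF Lc Xc])
  also have "Determinant.det Lm = 1"
    by (subst det_lower_triangular[OF _ Lc])
       (auto simp: Lm_def lower_unitri_above[OF L] lower_unitri_diag[OF L] prod_list_diag_prod)
  also have "Determinant.det X = (\<Prod>i<n. h i)"
    by (subst det_upper_triangular[OF _ Xc])
       (auto simp: X_def upper_triangular_def lower_unitri_above[OF U] lower_unitri_diag[OF U]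
         prod_list_diag_prod atLeast0LessThan)
  finally show ?thesis by simp
qed

lemma LDU_diag_nonzero:
  assumes "lower_unitri L" "lower_unitri U" "M = mmul (mmul L (diagm h)) (mtrans U)"
    and "\<forall>n. lead_minor M n \<noteq> 0"
  shows "h k \<noteq> 0"
  using lead_minor_LDU[OF assms(1-3), of "Suc k"] assms(4) by auto

section \<open>The Euler operator\<close>

lemma theta_has_derivative:
  assumes g: "(g has_derivative g') (at p)"
  shows "theta g p = g' p"
proof -
  obtain x y where p: "p = (x, y)" by fastforce
  have lin: "linear g'" using g by (rule has_derivative_linear)
  have dx: "deriv (\<lambda>t. g (t, y)) x = g' (1, 0)"
  proof (rule DERIV_imp_deriv)
    have "((\<lambda>t. (t, y)) has_derivative (\<lambda>t. (t, 0))) (at x)"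
      by (auto intro!: derivative_eq_intros)
    from has_derivative_compose[OF this] g p
    have "((\<lambda>t. g (t, y)) has_derivative (\<lambda>t. g' (t, 0))) (at x)" by simp
    moreover have "(\<lambda>t. g' (t, 0)) = (*) (g' (1, 0))"
    proof
      fix t show "g' (t, 0) = g' (1, 0) * t" using linear_scale[OF lin, of t "(1, 0)"] by simp
    qed
    ultimately show "((\<lambda>t. g (t, y)) has_field_derivative g' (1, 0)) (at x)"
      unfolding has_field_derivative_def by (rule has_derivative_eq_rhs)
  qed
  have dy: "deriv (\<lambda>t. g (x, t)) y = g' (0, 1)"
  proof (rule DERIV_imp_deriv)
    have "((\<lambda>t. (x, t)) has_derivative (\<lambda>t. (0, t))) (at y)"
      by (auto intro!: derivative_eq_intros)
    from has_derivative_compose[OF this] g p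
    have "((\<lambda>t. g (x, t)) has_derivative (\<lambda>t. g' (0, t))) (at y)" by simp
    moreover have "(\<lambda>t. g' (0, t)) = (*) (g' (0, 1))"
    proof
      fix t show "g' (0, t) = g' (0, 1) * t" using linear_scale[OF lin, of t "(0, 1)"] by simp
    qed
    ultimately show "((\<lambda>t. g (x, t)) has_field_derivative g' (0, 1)) (at y)"
      unfolding has_field_derivative_def by (rule has_derivative_eq_rhs)
  qed
  have "g' (x *\<^sub>R (1, 0) + y *\<^sub>R (0, 1)) = x * g' (1, 0) + y * g' (0, 1)"
    by (simp only: linear_add[OF lin] linear_scale[OF lin] real_scaleR_def)
  then show ?thesis
    by (simp add: theta_def p dx dy)
qed

lemma theta_mult:
  assumes "f differentiable (at p)" "g differentiable (at p)"
  shows "theta (\<lambda>q. f q * g q) p = f p * theta g p + theta f p * g p"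
proof -
  obtain f' g' where f: "(f has_derivative f') (at p)" and g: "(g has_derivative g') (at p)"
    using assms unfolding differentiable_def by blast
  show ?thesis
    using theta_has_derivative[OF has_derivative_mult[OF f g]]
      theta_has_derivative[OF f] theta_has_derivative[OF g] by simp
qed

lemma theta_sum:
  assumes "finite A" "\<And>i. i \<in> A \<Longrightarrow> f i differentiable (at p)"
  shows "theta (\<lambda>q. \<Sum>i\<in>A. f i q) p = (\<Sum>i\<in>A. theta (f i) p)"
proof -
  have "\<forall>i\<in>A. \<exists>f'. (f i has_derivative f') (at p)"
    using assms(2) by (simp add: differentiable_def)
  from bchoice[OF this] obtain f' where f: "\<forall>i\<in>A. (f i has_derivative f' i) (at p)"
    by blast
  then have "theta (f i) p = f' i p" if "i \<in> A" for i
    using that theta_has_derivative by blast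
  with f show ?thesis
    using theta_has_derivative[OF has_derivative_sum[of A f f']] by simp
qed

lemma theta_cong_open:
  assumes U: "open U" "p \<in> U" and eq: "\<And>q. q \<in> U \<Longrightarrow> f q = g q"
  shows "theta f p = theta g p"
proof -
  obtain x y where p: "p = (x, y)" by fastforce
  have "open ((\<lambda>t. (t, y)) -` U)" "open ((\<lambda>t. (x, t)) -` U)"
    by (intro open_vimage U continuous_intros)+
  from eventually_nhds_in_open[OF this(1), of x] eventually_nhds_in_open[OF this(2), of y]
  have "eventually (\<lambda>t. (t, y) \<in> U) (nhds x)" "eventually (\<lambda>t. (x, t) \<in> U) (nhds y)"
    using U(2) p by simp_all
  then have "eventually (\<lambda>t. f (t, y) = g (t, y)) (nhds x)"
    and "eventually (\<lambda>t. f (x, t) = g (x, t)) (nhds y)"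
    by (auto elim!: eventually_mono simp: eq)
  then show ?thesis
    by (simp add: theta_def p deriv_cong_ev)
qed

lemma differentiable_transform_open:
  assumes U: "open U" "p \<in> U" and eq: "\<And>q. q \<in> U \<Longrightarrow> f q = g q"
    and "g differentiable (at p)"
  shows "f differentiable (at p)"
proof -
  obtain g' where "(g has_derivative g') (at p)"
    using assms(4) unfolding differentiable_def by blast
  then have "(f has_derivative g') (at p)"
    by (rule has_derivative_transform_within_open[OF _ U]) (simp add: eq)
  then show ?thesis unfolding differentiable_def by blast
qed

lemma theta_const: "theta (\<lambda>q. c) p = 0"
  using theta_has_derivative[OF has_derivative_const] by simp

lemma theta_locally_constant:
  assumes "open U" "p \<in> U" and "\<And>q. q \<in> U \<Longrightarrow> f q = c"
  shows "theta f p = 0"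
  using theta_cong_open[OF assms] theta_const by simp

lemma differentiable_locally_constant:
  assumes "open U" "p \<in> U" and "\<And>q. q \<in> U \<Longrightarrow> f q = c"
  shows "f differentiable (at p)"
  using differentiable_transform_open[OF assms differentiable_const] .

section \<open>Moments of hypergeometric weights\<close>

lemma powser_Euler_operator:
  fixes a :: "nat \<Rightarrow> real"
  assumes "summable (\<lambda>k. a k * K ^ k)" and "\<bar>x\<bar> < \<bar>K\<bar>"
  shows "x * (\<Sum>n. diffs a n * x ^ n) = (\<Sum>k. real k * a k * x ^ k)"
proof -
  have "summable (\<lambda>n. diffs a n * x ^ n)"
    by (rule termdiff_converges[of x "\<bar>K\<bar>"]) (use assms(2) powser_inside[OF assms(1)] in auto)
  then have "(\<lambda>n. x * (diffs a n * x ^ n)) sums (x * (\<Sum>n. diffs a n * x ^ n))"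
    by (intro sums_mult summable_sums)
  moreover have "(\<lambda>n. x * (diffs a n * x ^ n)) = (\<lambda>n. real (Suc n) * a (Suc n) * x ^ Suc n)"
    by (auto simp: diffs_def)
  ultimately have "(\<lambda>k. real k * a k * x ^ k) sums (x * (\<Sum>n. diffs a n * x ^ n))"
    using sums_Suc_iff[of "\<lambda>k. real k * a k * x ^ k"] by simp
  then show ?thesis by (rule sums_unique)
qed

lemma hgw_eq_power: "hgw b c t k = hgw b c 1 k * t ^ k"
  by (simp add: hgw_def)

lemma hgw_moment_Euler_derivative:
  assumes "open V" "x \<in> V" and sm: "\<And>t. t \<in> V \<Longrightarrow> summable (\<lambda>k. real k ^ e * hgw b c t k)"
  shows "\<exists>D. ((\<lambda>t. \<Sum>k. real k ^ e * hgw b c t k) has_field_derivative D) (at x)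
            \<and> x * D = (\<Sum>k. real k ^ Suc e * hgw b c x k)"
proof -
  obtain r where "r > 0" "ball x r \<subseteq> V" using assms(1,2) open_contains_ball by blast
  define K where "K = (if 0 \<le> x then x + r / 2 else x - r / 2)"
  have "K \<in> V" "\<bar>x\<bar> < \<bar>K\<bar>"
    using \<open>r > 0\<close> \<open>ball x r \<subseteq> V\<close> by (auto simp: K_def dist_real_def)
  define a where "a k = real k ^ e * hgw b c 1 k" for k
  have series: "(\<lambda>k. real k ^ e * hgw b c t k) = (\<lambda>k. a k * t ^ k)"
    and series_Suc: "(\<lambda>k. real k ^ Suc e * hgw b c t k) = (\<lambda>k. real k * a k * t ^ k)" for t
    by (simp_all add: a_def hgw_eq_power[of b c t] mult_ac)
  have "summable (\<lambda>k. a k * K ^ k)"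
    using sm[OF \<open>K \<in> V\<close>] by (simp add: series)
  then show ?thesis
    unfolding series series_Suc
    using termdiffs_strong[of a K x] powser_Euler_operator[of a K x] \<open>\<bar>x\<bar> < \<bar>K\<bar>\<close> by auto
qed

lemma moment_has_derivative:
  assumes "open U" "p \<in> U"
    and sm: "\<forall>p\<in>U. \<forall>j. summable (\<lambda>k. real k ^ j * hgw b1 c (fst p) k)
                      \<and> summable (\<lambda>k. real k ^ j * hgw b2 c (snd p) k)"
  shows "\<exists>g'. ((\<lambda>q. moment b1 b2 c q i j) has_derivative g') (at p)
             \<and> g' p = moment b1 b2 c p (Suc i) j"
proof -
  obtain x y where p: "p = (x, y)" by fastforce
  define e where "e = i + j div 2"
  have "open ((\<lambda>t. (t, y)) -` U)" "open ((\<lambda>t. (x, t)) -` U)"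
    by (intro open_vimage assms(1) continuous_intros)+
  show ?thesis
  proof (cases "even j")
    case True
    have "\<exists>D. ((\<lambda>t. \<Sum>k. real k ^ e * hgw b1 c t k) has_field_derivative D) (at x)
              \<and> x * D = (\<Sum>k. real k ^ Suc e * hgw b1 c x k)"
      by (rule hgw_moment_Euler_derivative[OF \<open>open ((\<lambda>t. (t, y)) -` U)\<close>])
         (use sm assms(2) p in auto)
    then obtain D where D: "((\<lambda>t. \<Sum>k. real k ^ e * hgw b1 c t k) has_field_derivative D) (at x)"
      and xD: "x * D = (\<Sum>k. real k ^ Suc e * hgw b1 c x k)"
      by blast
    have "((\<lambda>q. moment b1 b2 c q i j) has_derivative (\<lambda>h. D * fst h)) (at p)"
      using has_derivative_compose[OF has_derivative_fst[OF has_derivative_ident, of "at p"],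
          of "\<lambda>t. \<Sum>k. real k ^ e * hgw b1 c t k" "(*) D"] D
      unfolding has_field_derivative_def
      by (simp add: moment_def True e_def p)
    then show ?thesis using xD True by (auto simp: moment_def e_def p mult.commute)
  next
    case False
    have "\<exists>D. ((\<lambda>t. \<Sum>k. real k ^ e * hgw b2 c t k) has_field_derivative D) (at y)
              \<and> y * D = (\<Sum>k. real k ^ Suc e * hgw b2 c y k)"
      by (rule hgw_moment_Euler_derivative[OF \<open>open ((\<lambda>t. (x, t)) -` U)\<close>])
         (use sm assms(2) p in auto)
    then obtain D where D: "((\<lambda>t. \<Sum>k. real k ^ e * hgw b2 c t k) has_field_derivative D) (at y)"
      and yD: "y * D = (\<Sum>k. real k ^ Suc e * hgw b2 c y k)"
      by blast
    have "((\<lambda>q. moment b1 b2 c q i j) has_derivative (\<lambda>h. D * snd h)) (at p)"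
      using has_derivative_compose[OF has_derivative_snd[OF has_derivative_ident, of "at p"],
          of "\<lambda>t. \<Sum>k. real k ^ e * hgw b2 c t k" "(*) D"] D
      unfolding has_field_derivative_def
      by (simp add: moment_def False e_def p)
    then show ?thesis using yD False by (auto simp: moment_def e_def p mult.commute)
  qed
qed

lemma moment_differentiable:
  assumes "open U" "p \<in> U"
    and "\<forall>p\<in>U. \<forall>j. summable (\<lambda>k. real k ^ j * hgw b1 c (fst p) k)
                    \<and> summable (\<lambda>k. real k ^ j * hgw b2 c (snd p) k)"
  shows "(\<lambda>q. moment b1 b2 c q i j) differentiable (at p)"
  using moment_has_derivative[OF assms] unfolding differentiable_def by blast

lemma theta_moment:
  assumes "open U" "p \<in> U"
    and "\<forall>p\<in>U. \<forall>j. summable (\<lambda>k. real k ^ j * hgw b1 c (fst p) k)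
                    \<and> summable (\<lambda>k. real k ^ j * hgw b2 c (snd p) k)"
  shows "theta (\<lambda>q. moment b1 b2 c q i j) p = moment b1 b2 c p (Suc i) j"
  using moment_has_derivative[OF assms] theta_has_derivative by metis

section \<open>Differentiability of the factors\<close>

lemma lower_unitri_upper_entry: "lower_unitri A \<Longrightarrow> i \<le> j \<Longrightarrow> A i j = (if i = j then 1 else 0)"
  by (auto simp: lower_unitri_above lower_unitri_diag)

lemma differentiable_lower_unitri_upper:
  assumes "open U" "p \<in> U" and "\<And>q. q \<in> U \<Longrightarrow> lower_unitri (A q)" and "i \<le> j"
  shows "(\<lambda>q. A q i j) differentiable (at p)"
  by (rule differentiable_locally_constant[OF assms(1,2)]) (simp add: assms(3,4) lower_unitri_upper_entry)

lemma theta_lower_unitri_upper: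
  assumes "open U" "p \<in> U" and "\<And>q. q \<in> U \<Longrightarrow> lower_unitri (A q)" and "i \<le> j"
  shows "theta (\<lambda>q. A q i j) p = 0"
  by (rule theta_locally_constant[OF assms(1,2)]) (simp add: assms(3,4) lower_unitri_upper_entry)

lemma strictly_lower_mtheta:
  assumes "open U" "p \<in> U" and "\<And>q. q \<in> U \<Longrightarrow> lower_unitri (A q)"
  shows "strictly_lower (mtheta A p)"
  using theta_lower_unitri_upper[OF assms] by (simp add: strictly_lower_def mtheta_def)

lemma LDU_factors_differentiable:
  assumes U: "open U" "p \<in> U"
    and LDU: "\<And>q. q \<in> U \<Longrightarrow> lower_unitri (L q) \<and> lower_unitri (R q)
                  \<and> M q = mmul (mmul (L q) (diagm (h q))) (mtrans (R q))"
    and h: "\<And>q k. q \<in> U \<Longrightarrow> h q k \<noteq> 0"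
    and M: "\<And>i j. (\<lambda>q. M q i j) differentiable (at p)"
  shows "(\<lambda>q. h q n) differentiable (at p)
       \<and> (\<forall>i. (\<lambda>q. L q i n) differentiable (at p) \<and> (\<lambda>q. R q i n) differentiable (at p))"
proof (induction n rule: less_induct)
  case (less n)
  have sum: "(\<lambda>q. \<Sum>k<n. L q i k * h q k * R q j k) differentiable (at p)" for i j
    using less by (intro differentiable_sum ballI differentiable_mult) auto
  have hn: "(\<lambda>q. h q n) differentiable (at p)"
  proof (rule differentiable_transform_open[OF U])
    show "h q n = M q n n - (\<Sum>k<n. L q n k * h q k * R q n k)" if "q \<in> U" for q
      using LDU_entry_split(1)[of "L q" "R q" "M q" "h q" n n] LDU[OF that]
      by (simp add: lower_unitri_diag)
    show "(\<lambda>q. M q n n - (\<Sum>k<n. L q n k * h q k * R q n k)) differentiable (at p)"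
      using M sum by (rule differentiable_diff)
  qed
  have "(\<lambda>q. L q i n) differentiable (at p) \<and> (\<lambda>q. R q i n) differentiable (at p)" for i
  proof (cases "i \<le> n")
    case True
    then show ?thesis
      using LDU by (auto intro!: differentiable_lower_unitri_upper[OF U])
  next
    case False
    have "(\<lambda>q. L q i n) differentiable (at p)"
    proof (rule differentiable_transform_open[OF U])
      show "L q i n = (M q i n - (\<Sum>k<n. L q i k * h q k * R q n k)) / h q n" if "q \<in> U" for q
        using LDU_entry_split(1)[of "L q" "R q" "M q" "h q" n i] LDU[OF that] h[OF that] False
        by (auto simp: field_simps)
      show "(\<lambda>q. (M q i n - (\<Sum>k<n. L q i k * h q k * R q n k)) / h q n) differentiable (at p)"
        using M sum hn h[OF U(2)] by (intro differentiable_divide differentiable_diff) auto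
    qed
    moreover have "(\<lambda>q. R q i n) differentiable (at p)"
    proof (rule differentiable_transform_open[OF U])
      show "R q i n = (M q n i - (\<Sum>k<n. L q n k * h q k * R q i k)) / h q n" if "q \<in> U" for q
        using LDU_entry_split(2)[of "L q" "R q" "M q" "h q" n i] LDU[OF that] h[OF that] False
        by (auto simp: field_simps)
      show "(\<lambda>q. (M q n i - (\<Sum>k<n. L q n k * h q k * R q i k)) / h q n) differentiable (at p)"
        using M sum hn h[OF U(2)] by (intro differentiable_divide differentiable_diff) auto
    qed
    ultimately show ?thesis ..
  qed
  with hn show ?case by blast
qed

lemma lower_unitri_left_inverse_differentiable:
  assumes U: "open U" "p \<in> U"
    and inv: "\<And>q. q \<in> U \<Longrightarrow> lower_unitri (S q) \<and> lower_unitri (L q) \<and> mmul (S q) (L q) = idm"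
    and L: "\<And>i j. (\<lambda>q. L q i j) differentiable (at p)"
  shows "(\<lambda>q. S q i j) differentiable (at p)"
proof (induction "i - j" arbitrary: j rule: less_induct)
  case less
  show ?case
  proof (cases "i \<le> j")
    case True
    then show ?thesis
      using inv by (auto intro!: differentiable_lower_unitri_upper[OF U])
  next
    case False
    show ?thesis
    proof (rule differentiable_transform_open[OF U])
      show "S q i j = - (\<Sum>k\<in>{j<..i}. S q i k * L q k j)" if "q \<in> U" for q
        using lower_unitri_left_inverse_entry False inv[OF that] by auto
      show "(\<lambda>q. - (\<Sum>k\<in>{j<..i}. S q i k * L q k j)) differentiable (at p)"
        using less L False
        by (intro differentiable_minus differentiable_sum ballI differentiable_mult) auto
    qed
  qed
qed

lemma LDU_conjugators_differentiable:
  assumes U: "open U" "p \<in> U"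
    and LDU: "\<And>q. q \<in> U \<Longrightarrow> lower_unitri (S q) \<and> lower_unitri (St q)
                  \<and> M q = mmul (mmul (lt_inv (S q)) (diagm (H q))) (mtrans (lt_inv (St q)))"
    and H: "\<And>q k. q \<in> U \<Longrightarrow> H q k \<noteq> 0"
    and M: "\<And>i j. (\<lambda>q. M q i j) differentiable (at p)"
  shows "(\<lambda>q. S q i j) differentiable (at p)" and "(\<lambda>q. St q i j) differentiable (at p)"
proof -
  have LDU': "lower_unitri (lt_inv (S q)) \<and> lower_unitri (lt_inv (St q))
      \<and> M q = mmul (mmul (lt_inv (S q)) (diagm (H q))) (mtrans (lt_inv (St q)))" if "q \<in> U" for q
    using LDU[OF that] lt_inv(1) by blast
  have factors: "(\<lambda>q. lt_inv (S q) i j) differentiable (at p)"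
    "(\<lambda>q. lt_inv (St q) i j) differentiable (at p)" for i j
    using LDU_factors_differentiable[OF U LDU' H M] by blast+
  show "(\<lambda>q. S q i j) differentiable (at p)"
    by (rule lower_unitri_left_inverse_differentiable[OF U, of S "\<lambda>q. lt_inv (S q)"])
       (use LDU lt_inv factors in auto)
  show "(\<lambda>q. St q i j) differentiable (at p)"
    by (rule lower_unitri_left_inverse_differentiable[OF U, of St "\<lambda>q. lt_inv (St q)"])
       (use LDU lt_inv factors in auto)
qed

section \<open>The compatibility conditions\<close>

lemma LDU_conjugate_derivative_entry:
  assumes l: "lower_unitri l" and u: "lower_unitri u" and s: "lower_unitri s" and st: "lower_unitri st"
    and M: "M = mmul (mmul l (diagm h)) (mtrans u)" and sl: "mmul s l = idm" and stu: "mmul st u = idm"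
    and dS: "\<And>a. n < a \<Longrightarrow> dS n a = 0" and dSt: "\<And>b. m < b \<Longrightarrow> dSt m b = 0"
  shows "(\<Sum>a\<le>n. \<Sum>b\<le>m. dS n a * M a b * st m b + s n a * M (Suc a) b * st m b
                            + s n a * M a b * dSt m b)
       = mmul dS l n m * h m + mmul (mmul s Lam) l n m * h m + h n * mmul dSt u m n"
proof -
  have "(\<Sum>a\<le>n. \<Sum>b\<le>m. dS n a * M a b * st m b) = (\<Sum>a\<le>n. dS n a * (\<Sum>b\<le>m. M a b * st m b))"
    by (simp add: sum_distrib_left mult.assoc)
  also have "\<dots> = mmul dS l n m * h m"
    by (simp add: LDU_mmul_right_inverse[OF l u st M stu] mmul_eq_sum_atMost[where A = dS and i = n, OF dS]
        sum_distrib_right mult.assoc)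
  finally have 1: "(\<Sum>a\<le>n. \<Sum>b\<le>m. dS n a * M a b * st m b) = mmul dS l n m * h m" .
  have "(\<Sum>a\<le>n. \<Sum>b\<le>m. s n a * M (Suc a) b * st m b) = (\<Sum>a\<le>n. s n a * (\<Sum>b\<le>m. M (Suc a) b * st m b))"
    by (simp add: sum_distrib_left mult.assoc)
  also have "\<dots> = mmul (mmul s Lam) l n m * h m"
    by (simp add: LDU_mmul_right_inverse[OF l u st M stu] mmul_Lam_entry[OF s]
        sum_distrib_right mult.assoc)
  finally have 2: "(\<Sum>a\<le>n. \<Sum>b\<le>m. s n a * M (Suc a) b * st m b) = mmul (mmul s Lam) l n m * h m" .
  have "(\<Sum>a\<le>n. \<Sum>b\<le>m. s n a * M a b * dSt m b) = (\<Sum>b\<le>m. (\<Sum>a\<le>n. s n a * M a b) * dSt m b)"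
    by (subst sum.swap) (simp add: sum_distrib_right)
  also have "\<dots> = (\<Sum>b\<le>m. h n * u b n * dSt m b)"
    by (simp add: LDU_mmul_left_inverse[OF l u s M sl])
  also have "\<dots> = h n * mmul dSt u m n"
    by (simp add: mmul_eq_sum_atMost[where A = dSt and i = m, OF dSt] sum_distrib_left mult_ac)
  finally have 3: "(\<Sum>a\<le>n. \<Sum>b\<le>m. s n a * M a b * dSt m b) = h n * mmul dSt u m n" .
  show ?thesis by (simp add: sum.distrib 1 2 3)
qed

lemma compare_triangular_parts:
  assumes \<phi>: "strictly_lower \<phi>" and \<psi>: "strictly_lower \<psi>" and h: "\<And>k. h k \<noteq> 0"
    and E: "E = madd (madd (madd (mmul (mmul LamT LamT) (diagm \<gamma>)) (mmul LamT (diagm \<beta>)))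
                      (diagm \<alpha>)) Lam"
    and K: "\<And>n m. dH n * idm n m = \<phi> n m * h m + E n m * h m + h n * \<psi> m n"
  shows "mmul (diagm dH) (diagm (\<lambda>i. inverse (h i))) = diagm \<alpha>"
    and "mneg \<phi> = madd (mmul (mmul LamT LamT) (diagm \<gamma>)) (mmul LamT (diagm \<beta>))"
    and "mneg \<psi> = mmul LamT (mmul (diagm (\<lambda>i. h (Suc i))) (diagm (\<lambda>i. inverse (h i))))"
proof -
  have \<phi>0: "\<phi> n m = 0" and \<psi>0: "\<psi> n m = 0" if "n \<le> m" for n m
    using \<phi> \<psi> that by (simp_all add: strictly_lower_def)
  have E_entry: "E n m = (if n = Suc (Suc m) then \<gamma> m else 0) + (if n = Suc m then \<beta> m else 0)
       + (if n = m then \<alpha> m else 0) + (if m = Suc n then 1 else 0)" for n m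
    unfolding E by (rule band_entry)
  have "dH n = \<alpha> n * h n" for n
    using K[of n n] \<phi>0[of n n] \<psi>0[of n n] by (simp add: E_entry idm_def diagm_def)
  then show "mmul (diagm dH) (diagm (\<lambda>i. inverse (h i))) = diagm \<alpha>"
    using h by (simp add: mmul_diagm_diagm field_simps)
  show "mneg \<phi> = madd (mmul (mmul LamT LamT) (diagm \<gamma>)) (mmul LamT (diagm \<beta>))"
  proof (intro ext)
    fix n m
    show "mneg \<phi> n m = madd (mmul (mmul LamT LamT) (diagm \<gamma>)) (mmul LamT (diagm \<beta>)) n m"
    proof (cases "m < n")
      case True
      then have "(\<phi> n m + E n m) * h m = 0"
        using K[of n m] \<psi>0[of m n] by (simp add: idm_def diagm_def algebra_simps)
      with h[of m] True show ?thesis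
        by (auto simp: mneg_def E_entry lower_band_entry)
    qed (simp add: mneg_def lower_band_entry \<phi>0)
  qed
  show "mneg \<psi> = mmul LamT (mmul (diagm (\<lambda>i. h (Suc i))) (diagm (\<lambda>i. inverse (h i))))"
  proof (intro ext)
    fix m n
    have "mmul LamT (mmul (diagm (\<lambda>i. h (Suc i))) (diagm (\<lambda>i. inverse (h i)))) m n
        = (if m = Suc n then h m / h n else 0)"
      unfolding mmul_LamT mmul_diagm_diagm by (auto simp: diagm_def field_simps)
    moreover have "mneg \<psi> m n = (if m = Suc n then h m / h n else 0)"
    proof (cases "n < m")
      case True
      then have "\<psi> m n = - E n m * h m / h n"
        using K[of n m] \<phi>0[of n m] h[of n] by (simp add: idm_def diagm_def field_simps)
      with True show ?thesis by (auto simp: mneg_def E_entry)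
    qed (auto simp: mneg_def \<psi>0)
    ultimately show "mneg \<psi> m n = mmul LamT (mmul (diagm (\<lambda>i. h (Suc i))) (diagm (\<lambda>i. inverse (h i)))) m n"
      by simp
  qed
qed

lemma theta_LDU_conjugate:
  assumes U: "open U" "p \<in> U"
    and LDU: "\<And>q. q \<in> U \<Longrightarrow> lower_unitri (S q) \<and> lower_unitri (St q)
                  \<and> M q = mmul (mmul (lt_inv (S q)) (diagm (H q))) (mtrans (lt_inv (St q)))"
    and S: "\<And>i j. (\<lambda>q. S q i j) differentiable (at p)"
    and St: "\<And>i j. (\<lambda>q. St q i j) differentiable (at p)"
    and M: "\<And>i j. (\<lambda>q. M q i j) differentiable (at p)"
    and theta_M: "\<And>i j. theta (\<lambda>q. M q i j) p = M p (Suc i) j"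
  shows "theta (\<lambda>q. H q n) p * idm n m
       = (\<Sum>a\<le>n. \<Sum>b\<le>m. mtheta S p n a * M p a b * St p m b + S p n a * M p (Suc a) b * St p m b
                         + S p n a * M p a b * mtheta St p m b)"
proof -
  have "theta (\<lambda>q. H q n) p * idm n m = theta (\<lambda>q. H q n * idm n m) p"
    by (cases "n = m") (simp_all add: idm_def diagm_def theta_const)
  also have "\<dots> = theta (\<lambda>q. \<Sum>a\<le>n. \<Sum>b\<le>m. S q n a * M q a b * St q m b) p"
  proof (rule theta_cong_open[OF U])
    fix q assume "q \<in> U"
    from LDU[OF this] have "lower_unitri (S q)" "lower_unitri (St q)"
      and "M q = mmul (mmul (lt_inv (S q)) (diagm (H q))) (mtrans (lt_inv (St q)))"
      by auto
    from LDU_conjugate[OF lt_inv(1)[OF this(1)] lt_inv(1)[OF this(2)] this lt_inv(2)[OF this(1)]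
        lt_inv(2)[OF this(2)]]
    show "H q n * idm n m = (\<Sum>a\<le>n. \<Sum>b\<le>m. S q n a * M q a b * St q m b)" by simp
  qed
  also have "\<dots> = (\<Sum>a\<le>n. \<Sum>b\<le>m. theta (\<lambda>q. S q n a * M q a b * St q m b) p)"
    using S M St by (simp add: theta_sum)
  also have "\<dots> = (\<Sum>a\<le>n. \<Sum>b\<le>m. mtheta S p n a * M p a b * St p m b
                       + S p n a * M p (Suc a) b * St p m b + S p n a * M p a b * mtheta St p m b)"
  proof (intro sum.cong refl)
    fix a b
    have "theta (\<lambda>q. S q n a * M q a b * St q m b) p
        = S p n a * M p a b * theta (\<lambda>q. St q m b) p + theta (\<lambda>q. S q n a * M q a b) p * St p m b"
      by (rule theta_mult) (simp_all add: S M St)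
    also have "theta (\<lambda>q. S q n a * M q a b) p = S p n a * M p (Suc a) b + theta (\<lambda>q. S q n a) p * M p a b"
      by (subst theta_mult) (simp_all add: S M theta_M)
    finally show "theta (\<lambda>q. S q n a * M q a b * St q m b) p = mtheta S p n a * M p a b * St p m b
        + S p n a * M p (Suc a) b * St p m b + S p n a * M p a b * mtheta St p m b"
      by (simp add: mtheta_def algebra_simps)
  qed
  finally show ?thesis .
qed

lemma Euler_identities:
  fixes S St M :: "real \<times> real \<Rightarrow> imat" and H :: "real \<times> real \<Rightarrow> nat \<Rightarrow> real"
  assumes U: "open U" "p \<in> U"
    and LDU: "\<And>q. q \<in> U \<Longrightarrow> lower_unitri (S q) \<and> lower_unitri (St q)
                  \<and> M q = mmul (mmul (lt_inv (S q)) (diagm (H q))) (mtrans (lt_inv (St q)))"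
    and H: "\<And>q k. q \<in> U \<Longrightarrow> H q k \<noteq> 0"
    and M: "\<And>i j. (\<lambda>q. M q i j) differentiable (at p)"
    and theta_M: "\<And>i j. theta (\<lambda>q. M q i j) p = M p (Suc i) j"
    and E: "mmul (mmul (S p) Lam) (lt_inv (S p)) =
           madd (madd (madd (mmul (mmul LamT LamT) (diagm \<gamma>)) (mmul LamT (diagm \<beta>))) (diagm \<alpha>)) Lam"
  shows "mmul (diagm (\<lambda>i. theta (\<lambda>q. H q i) p)) (diagm (\<lambda>i. inverse (H p i))) = diagm \<alpha>
   \<and> mneg (phi S p) = madd (mmul (mmul LamT LamT) (diagm \<gamma>)) (mmul LamT (diagm \<beta>))
   \<and> mneg (phi St p) = mmul LamT (mmul (diagm (\<lambda>i. H p (Suc i))) (diagm (\<lambda>i. inverse (H p i))))"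
proof -
  from LDU[OF \<open>p \<in> U\<close>] have S: "lower_unitri (S p)" and St: "lower_unitri (St p)"
    and Mp: "M p = mmul (mmul (lt_inv (S p)) (diagm (H p))) (mtrans (lt_inv (St p)))"
    by auto
  have lower_theta_S: "strictly_lower (mtheta S p)"
    and lower_theta_St: "strictly_lower (mtheta St p)"
    using LDU by (auto intro!: strictly_lower_mtheta[OF U])
  have S_diff: "(\<lambda>q. S q i j) differentiable (at p)"
    and St_diff: "(\<lambda>q. St q i j) differentiable (at p)" for i j
    using LDU_conjugators_differentiable[OF U LDU H M] by simp_all
  have K: "theta (\<lambda>q. H q n) p * idm n m
      = (\<Sum>a\<le>n. \<Sum>b\<le>m. mtheta S p n a * M p a b * St p m b + S p n a * M p (Suc a) b * St p m b
                        + S p n a * M p a b * mtheta St p m b)" for n m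
    by (rule theta_LDU_conjugate[OF U LDU]) (simp_all add: S_diff St_diff M theta_M)
  have "theta (\<lambda>q. H q n) p * idm n m = phi S p n m * H p m
      + mmul (mmul (S p) Lam) (lt_inv (S p)) n m * H p m + H p n * phi St p m n" for n m
    unfolding phi_def K
    by (rule LDU_conjugate_derivative_entry[OF lt_inv(1)[OF S] lt_inv(1)[OF St] S St Mp
          lt_inv(2)[OF S] lt_inv(2)[OF St]])
       (use lower_theta_S lower_theta_St in \<open>simp_all add: strictly_lower_def\<close>)
  from compare_triangular_parts[OF _ _ H[OF \<open>p \<in> U\<close>] E this]
  show ?thesis
    using strictly_lower_mmul[OF lower_theta_S lt_inv(1)[OF S]]
      strictly_lower_mmul[OF lower_theta_St lt_inv(1)[OF St]]
    by (simp add: phi_def)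
qed

theorem mainTheorem16:
  fixes b1 b2 c :: "real list" and U :: "(real \<times> real) set"
    and S St :: "real \<times> real \<Rightarrow> imat"
    and H \<alpha> \<beta> \<gamma> :: "real \<times> real \<Rightarrow> nat \<Rightarrow> real"
  assumes "open U"
    and "\<forall>x\<in>set c. \<forall>m::nat. x \<noteq> - real m"
    and "\<forall>p\<in>U. \<forall>j. summable (\<lambda>k. real k ^ j * hgw b1 c (fst p) k)
                   \<and> summable (\<lambda>k. real k ^ j * hgw b2 c (snd p) k)"
    and "\<forall>p\<in>U. \<forall>n. lead_minor (moment b1 b2 c p) n \<noteq> 0"
    and "\<forall>p\<in>U. lower_unitri (S p) \<and> lower_unitri (St p) \<and>
           moment b1 b2 c p = mmul (mmul (lt_inv (S p)) (diagm (H p))) (mtrans (lt_inv (St p)))"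
    and "\<forall>p\<in>U. mmul (mmul (S p) Lam) (lt_inv (S p)) =
           madd (madd (madd (mmul (mmul LamT LamT) (diagm (\<gamma> p))) (mmul LamT (diagm (\<beta> p))))
                      (diagm (\<alpha> p))) Lam"
  shows "\<forall>p\<in>U.
     mmul (diagm (\<lambda>i. theta (\<lambda>q. H q i) p)) (diagm (\<lambda>i. inverse (H p i))) = diagm (\<alpha> p)
   \<and> mneg (phi S p) = madd (mmul (mmul LamT LamT) (diagm (\<gamma> p))) (mmul LamT (diagm (\<beta> p)))
   \<and> mneg (phi St p) = mmul LamT (mmul (diagm (\<lambda>i. H p (Suc i))) (diagm (\<lambda>i. inverse (H p i))))"
proof
  fix p assume "p \<in> U"
  have LDU: "lower_unitri (S q) \<and> lower_unitri (St q)
      \<and> moment b1 b2 c q = mmul (mmul (lt_inv (S q)) (diagm (H q))) (mtrans (lt_inv (St q)))"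
    if "q \<in> U" for q
    using assms(5) that by blast
  have H: "H q k \<noteq> 0" if "q \<in> U" for q k
    using LDU_diag_nonzero[OF lt_inv(1) lt_inv(1)] LDU[OF that] assms(4) that by blast
  show "mmul (diagm (\<lambda>i. theta (\<lambda>q. H q i) p)) (diagm (\<lambda>i. inverse (H p i))) = diagm (\<alpha> p)
   \<and> mneg (phi S p) = madd (mmul (mmul LamT LamT) (diagm (\<gamma> p))) (mmul LamT (diagm (\<beta> p)))
   \<and> mneg (phi St p) = mmul LamT (mmul (diagm (\<lambda>i. H p (Suc i))) (diagm (\<lambda>i. inverse (H p i))))"
    using Euler_identities[where M = "moment b1 b2 c" and H = H, OF assms(1) \<open>p \<in> U\<close> LDU H
        moment_differentiable[OF assms(1) \<open>p \<in> U\<close> assms(3)] theta_moment[OF assms(1) \<open>p \<in> U\<close> assms(3)]]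
      assms(6) \<open>p \<in> U\<close>
    by blast
qed

end
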